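(* Let $f(x)=a_nx^n+\dots+a_1x+a_0\in\mathbb{O}[x]$ with $n\ge1$ and $a_n\neq0$, where $\mathbb{O}$ is the real octonion algebra. Then every root $r\in\mathbb{O}$ of $f(x)$ and every root $r\in\mathbb{O}$ of $f'(x)$ satisfies $|r|<\widetilde R_1(f)=\frac{1}{|a_n|}\sqrt{|a_n|^2+|a_{n-1}|^2+\dots+|a_0|^2}$, $|r|<\widetilde R_2(f)=1+\frac{1}{|a_n|}\max_{0\le k\le n-1}|a_k|$, and $|r|\le\widetilde R_3(f)=\max\{1,\frac{1}{|a_n|}(|a_{n-1}|+\dots+|a_0|)\}$; i.e. $\rho(f),\rho(f')<\widetilde R_1(f)$, $\rho(f),\rho(f')<\widetilde R_2(f)$, $\rho(f),\rho(f')\le\widetilde R_3(f)$.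
   Context: $\mathbb{O}=(-1,-1,-1)_{\mathbb{R}}$ is the real Cayley--Dickson algebra obtained from $\mathbb{R}$ by three doublings $B\{\gamma\}=B\times B$, $(a,b)(c,d)=(ac+\gamma\bar d b,\ da+b\bar c)$, $\overline{(a,b)}=(\bar a,-b)$, with $\gamma=-1$. Norm $\mathrm{n}(\lambda)=\bar\lambda\lambda$ and $|\lambda|=\sqrt{\mathrm{n}(\lambda)}$ (Euclidean norm). $\mathbb{O}[x]=\mathbb{O}\otimes_{\mathbb{R}}\mathbb{R}[x]$ with central $x$; substitution $f(r)=\sum_k a_k(r^k)$; formal derivative $f'(x)=\sum_k ka_kx^{k-1}$. The spectral radius of $g$ is $\rho(g)=\sup\{|\lambda|:\lambda\in\mathbb{O},\ g(\lambda)=0\}$. *)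

theory Defs
  imports "HOL-Analysis.Analysis"
begin

text \<open>Cayley--Dickson doubling B{gamma} = B x B with gamma = -1:
  (a,b)(c,d) = (ac - conj(d) b, da + b conj(c)),  conj(a,b) = (conj a, -b).\<close>

definition cd_mult :: "('a::ab_group_add \<Rightarrow> 'a \<Rightarrow> 'a) \<Rightarrow> ('a \<Rightarrow> 'a)
    \<Rightarrow> 'a \<times> 'a \<Rightarrow> 'a \<times> 'a \<Rightarrow> 'a \<times> 'a" where
  "cd_mult m cj x y = (m (fst x) (fst y) - m (cj (snd y)) (snd x),
                       m (snd y) (fst x) + m (snd x) (cj (fst y)))"

definition cd_cnj :: "('a::ab_group_add \<Rightarrow> 'a) \<Rightarrow> 'a \<times> 'a \<Rightarrow> 'a \<times> 'a" where
  "cd_cnj cj x = (cj (fst x), - snd x)"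

type_synonym cplx = "real \<times> real"
type_synonym quat = "cplx \<times> cplx"
type_synonym oct = "quat \<times> quat"

definition c_mult :: "cplx \<Rightarrow> cplx \<Rightarrow> cplx" where "c_mult = cd_mult (*) id"
definition c_cnj :: "cplx \<Rightarrow> cplx" where "c_cnj = cd_cnj id"
definition q_mult :: "quat \<Rightarrow> quat \<Rightarrow> quat" where "q_mult = cd_mult c_mult c_cnj"
definition q_cnj :: "quat \<Rightarrow> quat" where "q_cnj = cd_cnj c_cnj"
definition o_mult :: "oct \<Rightarrow> oct \<Rightarrow> oct" where "o_mult = cd_mult q_mult q_cnj"
definition o_cnj :: "oct \<Rightarrow> oct" where "o_cnj = cd_cnj q_cnj"

definition o_one :: oct where "o_one = (((1, 0), (0, 0)), ((0, 0), (0, 0)))"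

text \<open>Powers (octonions are power-associative).\<close>
primrec o_pow :: "oct \<Rightarrow> nat \<Rightarrow> oct" where
  "o_pow r 0 = o_one"
| "o_pow r (Suc k) = o_mult r (o_pow r k)"

definition o_peval :: "(nat \<Rightarrow> oct) \<Rightarrow> nat \<Rightarrow> oct \<Rightarrow> oct" where
  "o_peval a n r = (\<Sum>k\<le>n. o_mult (a k) (o_pow r k))"

definition o_pderiv_eval :: "(nat \<Rightarrow> oct) \<Rightarrow> nat \<Rightarrow> oct \<Rightarrow> oct" where
  "o_pderiv_eval a n r = (\<Sum>k=1..n. o_mult (real k *\<^sub>R a k) (o_pow r (k - 1)))"

text \<open>The Euclidean norm |lambda| is the product norm on nested pairs of reals.\<close>

end

theory Submission
  imports Defs
begin

text \<open>The octonion norm is multiplicative (Degen's eight-square identity), so at a root r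
  of f the leading term is dominated by the others: |a_n| |r|^n <= sum_{k<n} |a_k| |r|^k.
  The derivative is the polynomial with coefficients (k+1) a_(k+1); after division by n it
  satisfies the same kind of inequality, with coefficients bounded by |a_1|, ..., |a_(n-1)|.
  All three radii follow from a real inequality A t^m <= sum_{k<m} c_k t^k: for t >= 1 by
  Cauchy--Schwarz, resp. by comparison with a geometric series, and for t > 1 by bounding
  every t^k by t^(m-1).\<close>

lemma less_of_power_le_geometric_sum:
  fixes B D u :: real
  assumes B: "B > 0" and u: "u \<ge> 1" and le: "B * u ^ m \<le> D * (\<Sum>k<m. u ^ k)"
  shows "B * (u - 1) < D"
proof -
  have um: "u ^ m > 0" using u by simp
  have "D > 0"
  proof (rule ccontr)
    assume "\<not> D > 0"
    then have "D * (\<Sum>k<m. u ^ k) \<le> 0" using u by (simp add: mult_nonpos_nonneg sum_nonneg)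
    with le B um show False by (smt (verit) mult_pos_pos)
  qed
  have "B * u ^ m * (u - 1) \<le> D * (\<Sum>k<m. u ^ k) * (u - 1)"
    using le u by (simp add: mult_right_mono)
  also have "\<dots> = D * (u ^ m - 1)" using power_diff_1_eq[of u m] by (simp only: mult_ac)
  also have "\<dots> < D * u ^ m" using \<open>D > 0\<close> by simp
  finally have "u ^ m * (B * (u - 1)) < u ^ m * D" by (simp add: algebra_simps)
  then show ?thesis using um by simp
qed

lemma dominated_leading_term_sqrt_bound:
  fixes A t C :: real and c :: "nat \<Rightarrow> real"
  assumes A: "A > 0" and t: "t \<ge> 0"
    and dom: "A * t ^ m \<le> (\<Sum>k<m. c k * t ^ k)"
    and C: "(\<Sum>k<m. (c k)\<^sup>2) \<le> C"
  shows "t < sqrt (A\<^sup>2 + C) / A"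
proof (cases "t < 1")
  case True
  have "C \<ge> 0" using C by (meson order_trans sum_nonneg zero_le_power2)
  then have "1 \<le> sqrt (A\<^sup>2 + C) / A" using A by (simp add: le_divide_eq real_le_rsqrt)
  with True show ?thesis by simp
next
  case False
  have "(A * t ^ m)\<^sup>2 \<le> (\<Sum>k<m. c k * t ^ k)\<^sup>2"
    using dom A t by (simp add: power_mono)
  also have "\<dots> \<le> (\<Sum>k<m. (c k)\<^sup>2) * (\<Sum>k<m. (t ^ k)\<^sup>2)" by (rule Cauchy_Schwarz_ineq_sum)
  also have "\<dots> \<le> C * (\<Sum>k<m. (t ^ k)\<^sup>2)" using C by (simp add: mult_right_mono sum_nonneg)
  finally have "A\<^sup>2 * (t\<^sup>2) ^ m \<le> C * (\<Sum>k<m. (t\<^sup>2) ^ k)"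
    by (simp add: power_mult_distrib flip: power_mult mult.commute)
  then have "A\<^sup>2 * (t\<^sup>2 - 1) < C"
    using A False by (intro less_of_power_le_geometric_sum) (simp_all add: one_le_power)
  then have "t\<^sup>2 < (A\<^sup>2 + C) / A\<^sup>2" using A by (simp add: field_simps)
  then have "sqrt (t\<^sup>2) < sqrt ((A\<^sup>2 + C) / A\<^sup>2)" by (simp only: real_sqrt_less_mono)
  then show ?thesis using A t by (simp add: real_sqrt_divide)
qed

lemma dominated_leading_term_max_bound:
  fixes A t M :: real and c :: "nat \<Rightarrow> real"
  assumes A: "A > 0" and t: "t \<ge> 0" and c: "\<And>k. k < m \<Longrightarrow> 0 \<le> c k \<and> c k \<le> M"
    and dom: "A * t ^ m \<le> (\<Sum>k<m. c k * t ^ k)"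
  shows "t < 1 + M / A"
proof (cases "t < 1")
  case True
  have "m \<noteq> 0"
  proof
    assume "m = 0"
    with dom A show False by simp
  qed
  then have "M \<ge> 0" using c[of 0] by simp
  with True A show ?thesis by (smt (verit) divide_nonneg_pos)
next
  case False
  have "(\<Sum>k<m. c k * t ^ k) \<le> (\<Sum>k<m. M * t ^ k)"
    using c t by (intro sum_mono mult_right_mono) auto
  with dom have "A * t ^ m \<le> M * (\<Sum>k<m. t ^ k)" by (simp add: sum_distrib_left)
  with A False have "A * (t - 1) < M" by (intro less_of_power_le_geometric_sum) simp_all
  then show ?thesis using A by (simp add: field_simps)
qed

lemma dominated_leading_term_sum_bound:
  fixes A t S :: real and c :: "nat \<Rightarrow> real"
  assumes A: "A > 0" and c: "\<And>k. k < m \<Longrightarrow> 0 \<le> c k"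
    and dom: "A * t ^ m \<le> (\<Sum>k<m. c k * t ^ k)"
    and S: "(\<Sum>k<m. c k) \<le> S"
  shows "t \<le> max 1 (S / A)"
proof (cases "t \<le> 1")
  case False
  obtain m' where m: "m = Suc m'" using dom A by (cases m) auto
  have "(\<Sum>k<m. c k * t ^ k) \<le> (\<Sum>k<m. c k * t ^ m')"
    using False c m by (intro sum_mono mult_left_mono power_increasing) auto
  also have "\<dots> \<le> S * t ^ m'"
    using S False by (simp add: mult_right_mono flip: sum_distrib_right)
  finally have "t ^ m' * (A * t) \<le> t ^ m' * S" using dom m by (simp add: algebra_simps)
  then have "A * t \<le> S" using False by simp
  then have "t \<le> S / A" using A by (simp add: field_simps)
  then show ?thesis by simp
qed simp

lemma sum_lessThan_le_shifted:
  fixes f g :: "nat \<Rightarrow> 'a::ordered_comm_monoid_add"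
  assumes "\<And>k. k < m \<Longrightarrow> f k \<le> g (k + s)" and "m + s \<le> n" and "\<And>k. k < n \<Longrightarrow> 0 \<le> g k"
  shows "(\<Sum>k<m. f k) \<le> (\<Sum>k<n. g k)"
proof -
  have "(\<Sum>k<m. f k) \<le> (\<Sum>k<m. g (k + s))" using assms(1) by (intro sum_mono) auto
  also have "\<dots> = (\<Sum>k\<in>(\<lambda>k. k + s) ` {..<m}. g k)" by (simp add: sum.reindex)
  also have "\<dots> \<le> (\<Sum>k<n. g k)" using assms(2,3) by (intro sum_mono2) auto
  finally show ?thesis .
qed

lemma norm_o_mult: "norm (o_mult x y) = norm x * norm y"
proof -
  obtain x1 x2 x3 x4 x5 x6 x7 x8 where x: "x = (((x1, x2), (x3, x4)), ((x5, x6), (x7, x8)))"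
    by (metis prod.exhaust)
  obtain y1 y2 y3 y4 y5 y6 y7 y8 where y: "y = (((y1, y2), (y3, y4)), ((y5, y6), (y7, y8)))"
    by (metis prod.exhaust)
  have "(norm (o_mult x y))\<^sup>2 = (norm x)\<^sup>2 * (norm y)\<^sup>2"
    unfolding x y
    by (simp add: o_mult_def q_mult_def c_mult_def cd_mult_def q_cnj_def c_cnj_def cd_cnj_def
        norm_Pair power2_eq_square) algebra
  then have "(norm (o_mult x y))\<^sup>2 = (norm x * norm y)\<^sup>2" by (simp add: power_mult_distrib)
  then show ?thesis by (simp add: power2_eq_iff_nonneg)
qed

lemma norm_o_pow: "norm (o_pow r k) = norm r ^ k"
  by (induction k) (simp_all add: norm_o_mult o_one_def norm_Pair)

lemma o_pderiv_eval_Suc: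
  "o_pderiv_eval a (Suc n) r = o_peval (\<lambda>k. real (Suc k) *\<^sub>R a (Suc k)) n r"
  unfolding o_pderiv_eval_def o_peval_def One_nat_def sum.shift_bounds_cl_Suc_ivl
  by (simp add: atMost_atLeast0)

lemma o_peval_root_leading_term_le:
  assumes "o_peval a n r = 0"
  shows "norm (a n) * norm r ^ n \<le> (\<Sum>k<n. norm (a k) * norm r ^ k)"
proof -
  have "o_mult (a n) (o_pow r n) = - (\<Sum>k<n. o_mult (a k) (o_pow r k))"
    using assms unfolding o_peval_def
    by (simp add: eq_neg_iff_add_eq_0 add.commute flip: lessThan_Suc_atMost)
  then have "norm (o_mult (a n) (o_pow r n)) = norm (\<Sum>k<n. o_mult (a k) (o_pow r k))"
    by simp
  then have "norm (a n) * norm r ^ n = norm (\<Sum>k<n. o_mult (a k) (o_pow r k))"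
    by (simp add: norm_o_mult norm_o_pow)
  also have "\<dots> \<le> (\<Sum>k<n. norm (a k) * norm r ^ k)"
    by (rule order_trans[OF norm_sum]) (simp add: norm_o_mult norm_o_pow)
  finally show ?thesis .
qed

lemma o_root_leading_term_dominated:
  assumes "n \<ge> 1" and "o_peval a n r = 0 \<or> o_pderiv_eval a n r = 0"
  obtains m s and c :: "nat \<Rightarrow> real"
  where "m + s = n" and "\<And>k. k < m \<Longrightarrow> 0 \<le> c k \<and> c k \<le> norm (a (k + s))"
    and "norm (a n) * norm r ^ m \<le> (\<Sum>k<m. c k * norm r ^ k)"
  using assms(2)
proof
  assume "o_peval a n r = 0"
  with o_peval_root_leading_term_le show thesis by (intro that[of n 0 "\<lambda>k. norm (a k)"]) auto
next
  assume root: "o_pderiv_eval a n r = 0"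
  obtain N where n: "n = Suc N" using assms(1) by (cases n) auto
  define c where "c k = real (Suc k) / real n * norm (a (Suc k))" for k
  have "real n * norm (a n) * norm r ^ N \<le> (\<Sum>k<N. real (Suc k) * norm (a (Suc k)) * norm r ^ k)"
    using o_peval_root_leading_term_le[of "\<lambda>k. real (Suc k) *\<^sub>R a (Suc k)" N r] root
    by (simp add: n o_pderiv_eval_Suc mult.assoc)
  then have "norm (a n) * norm r ^ N
      \<le> (\<Sum>k<N. real (Suc k) * norm (a (Suc k)) * norm r ^ k) / real n"
    by (simp add: n pos_le_divide_eq mult_ac del: of_nat_Suc)
  also have "\<dots> = (\<Sum>k<N. c k * norm r ^ k)"
    by (simp add: c_def sum_divide_distrib)
  finally have "norm (a n) * norm r ^ N \<le> (\<Sum>k<N. c k * norm r ^ k)" .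
  moreover have "0 \<le> c k \<and> c k \<le> norm (a (k + 1))" if "k < N" for k
  proof -
    have "real (Suc k) / real n \<le> 1" using that n by simp
    then show ?thesis
      using mult_left_le_one_le[of "norm (a (Suc k))" "real (Suc k) / real n"] by (simp add: c_def)
  qed
  ultimately show thesis using n by (intro that[of N 1 c]) auto
qed

theorem corollary4p15:
  fixes a :: "nat \<Rightarrow> oct" and n :: nat and r :: oct
  assumes "n \<ge> 1" and "a n \<noteq> 0"
    and "o_peval a n r = 0 \<or> o_pderiv_eval a n r = 0"
  shows "norm r < sqrt (\<Sum>k\<le>n. (norm (a k))\<^sup>2) / norm (a n)
       \<and> norm r < 1 + Max ((\<lambda>k. norm (a k)) ` {..<n}) / norm (a n)
       \<and> norm r \<le> max 1 ((\<Sum>k<n. norm (a k)) / norm (a n))"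
proof -
  obtain m s c where ms: "m + s = n" and c: "\<And>k. k < m \<Longrightarrow> 0 \<le> c k \<and> c k \<le> norm (a (k + s))"
    and dom: "norm (a n) * norm r ^ m \<le> (\<Sum>k<m. c k * norm r ^ k)"
    using o_root_leading_term_dominated[OF assms(1,3)] by blast
  have A: "norm (a n) > 0" using assms(2) by simp
  have "(\<Sum>k<m. (c k)\<^sup>2) \<le> (\<Sum>k<n. (norm (a k))\<^sup>2)"
    using c ms by (intro sum_lessThan_le_shifted power_mono) auto
  from dominated_leading_term_sqrt_bound[OF A norm_ge_zero dom this]
  have sqrt_bound: "norm r < sqrt (\<Sum>k\<le>n. (norm (a k))\<^sup>2) / norm (a n)"
    by (simp add: add.commute flip: lessThan_Suc_atMost)
  have "c k \<le> Max ((\<lambda>k. norm (a k)) ` {..<n})" if "k < m" for k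
    using c[OF that] ms that by (intro order_trans[OF _ Max_ge]) auto
  with c have max_bound: "norm r < 1 + Max ((\<lambda>k. norm (a k)) ` {..<n}) / norm (a n)"
    by (intro dominated_leading_term_max_bound[OF A norm_ge_zero _ dom]) auto
  have "(\<Sum>k<m. c k) \<le> (\<Sum>k<n. norm (a k))"
    using c ms by (intro sum_lessThan_le_shifted) auto
  with c have "norm r \<le> max 1 ((\<Sum>k<n. norm (a k)) / norm (a n))"
    by (intro dominated_leading_term_sum_bound[OF A _ dom]) auto
  with sqrt_bound max_bound show ?thesis by blast
qed

end
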